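(* Let $X$ be a scalable monoid over a ring $R$. If $X$ is equipped with a dense closed set $U$ of unit elements, then $X$ is distributive: for all orbitoids $\mathsf{A},\mathsf{B}\in X/{\sim}$, all $x,y\in\mathsf{A}$ and all $z\in\mathsf{B}$, $(x+y)z=xz+yz$ and $z(x+y)=zx+zy$.
   Context: A scalable monoid over a (unital, associative) ring $R$ is a monoid $X$ (identity $1_X$, product written $xy$) together with a map $R\times X\to X$, $(\alpha,x)\mapsto\alpha\cdot x$, such that $1\cdot x=x$, $\alpha\cdot(\beta\cdot x)=\alpha\beta\cdot x$ and $\alpha\cdot(xy)=(\alpha\cdot x)y=x(\alpha\cdot y)$. On $X$, $x\sim y$ iff $\alpha\cdot x=\beta\cdot y$ for some $\alpha,\beta\in R$; its classes are orbitoids, $[x]$ is the orbitoid of $x$, and $X/{\sim}$ is the set of orbitoids. A unit element for an orbitoid $\mathsf{C}$ is some $u\in\mathsf{C}$ such that every $x\in\mathsf{C}$ equals $\lambda\cdot u$ for some $\lambda\in R$ and $\lambda\cdot u=\lambda'\cdot u$ implies $\lambda=\lambda'$; a unit element of $X$ means a unit element for its own orbitoid. A set $U\subseteq X$ is dense if for every $x\in X$ there is $u\in U$ with $u\sim x$, and closed if $u,v\in U$ implies $uv\in U$. For $x,y$ in an orbitoid with unit element $u$, $x=\rho\cdot u$, $y=\sigma\cdot u$, the sum is $x+y:=(\rho+\sigma)\cdot u$ (independent of the choice of $u$). *)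

theory Defs
  imports Main
begin

definition scalable_monoid :: "('x \<Rightarrow> 'x \<Rightarrow> 'x) \<Rightarrow> 'x \<Rightarrow> ('r::ring_1 \<Rightarrow> 'x \<Rightarrow> 'x) \<Rightarrow> bool" where
  "scalable_monoid mul e sc \<longleftrightarrow>
     (\<forall>x y z. mul (mul x y) z = mul x (mul y z)) \<and>
     (\<forall>x. mul e x = x \<and> mul x e = x) \<and>
     (\<forall>x. sc 1 x = x) \<and>
     (\<forall>a b x. sc a (sc b x) = sc (a * b) x) \<and>
     (\<forall>a x y. sc a (mul x y) = mul (sc a x) y \<and> sc a (mul x y) = mul x (sc a y))"

definition sm_sim :: "('r \<Rightarrow> 'x \<Rightarrow> 'x) \<Rightarrow> 'x \<Rightarrow> 'x \<Rightarrow> bool" where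
  "sm_sim sc x y \<longleftrightarrow> (\<exists>a b. sc a x = sc b y)"

definition orbitoid :: "('r \<Rightarrow> 'x \<Rightarrow> 'x) \<Rightarrow> 'x \<Rightarrow> 'x set" where
  "orbitoid sc x = {y. sm_sim sc x y}"

definition orbitoids :: "('r \<Rightarrow> 'x \<Rightarrow> 'x) \<Rightarrow> 'x set set" where
  "orbitoids sc = range (orbitoid sc)"

definition unit_for :: "('r \<Rightarrow> 'x \<Rightarrow> 'x) \<Rightarrow> 'x set \<Rightarrow> 'x \<Rightarrow> bool" where
  "unit_for sc C u \<longleftrightarrow> u \<in> C \<and> (\<forall>x\<in>C. \<exists>l. x = sc l u) \<and>
     (\<forall>l l'. sc l u = sc l' u \<longrightarrow> l = l')"

definition unit_elem :: "('r \<Rightarrow> 'x \<Rightarrow> 'x) \<Rightarrow> 'x \<Rightarrow> bool" where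
  "unit_elem sc u \<longleftrightarrow> unit_for sc (orbitoid sc u) u"

definition dense :: "('r \<Rightarrow> 'x \<Rightarrow> 'x) \<Rightarrow> 'x set \<Rightarrow> bool" where
  "dense sc U \<longleftrightarrow> (\<forall>x. \<exists>u\<in>U. sm_sim sc u x)"

definition closed_set :: "('x \<Rightarrow> 'x \<Rightarrow> 'x) \<Rightarrow> 'x set \<Rightarrow> bool" where
  "closed_set mul U \<longleftrightarrow> (\<forall>u\<in>U. \<forall>v\<in>U. mul u v \<in> U)"

definition sm_add :: "('r::ring_1 \<Rightarrow> 'x \<Rightarrow> 'x) \<Rightarrow> 'x \<Rightarrow> 'x \<Rightarrow> 'x" where
  "sm_add sc x y = (SOME s. \<exists>u r q. unit_for sc (orbitoid sc x) u \<and>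
      x = sc r u \<and> y = sc q u \<and> s = sc (r + q) u)"

end

theory Submission
  imports Defs
begin

text \<open>Every element is a multiple \<open>r \<cdot> u\<close> of a unit element \<open>u \<in> U\<close>, and the orbitoid of
  \<open>r \<cdot> u\<close> is exactly the set of multiples of \<open>u\<close> (density is needed here, as \<open>\<sim>\<close> need
  not be transitive in general). So \<open>x, y\<close> in one orbitoid and \<open>z\<close> in another
  can be written \<open>x = r \<cdot> u\<close>, \<open>y = q \<cdot> u\<close>, \<open>z = k \<cdot> v\<close> with \<open>u, v \<in> U\<close>. Then
  \<open>(x + y) z = ((r + q) k) \<cdot> uv = (r k) \<cdot> uv + (q k) \<cdot> uv = xz + yz\<close>, where the middle sum is
  computed with the unit element \<open>uv \<in> U\<close>; symmetrically on the other side.\<close>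

lemma unit_elem_orbitoid_scale:
  assumes "unit_elem sc u" and "x \<in> orbitoid sc u"
  shows "\<exists>l. x = sc l u"
  using assms unfolding unit_elem_def unit_for_def by blast

lemma unit_elem_scale_inj:
  assumes "unit_elem sc u" and "sc l u = sc l' u"
  shows "l = l'"
  using assms unfolding unit_elem_def unit_for_def by blast

locale scalable =
  fixes mul :: "'x \<Rightarrow> 'x \<Rightarrow> 'x" and e :: 'x and sc :: "'r::ring_1 \<Rightarrow> 'x \<Rightarrow> 'x"
  assumes scalable_monoid: "scalable_monoid mul e sc"
begin

lemma scale_scale [simp]: "sc a (sc b x) = sc (a * b) x"
  and mul_scale_left [simp]: "mul (sc a x) y = sc a (mul x y)"
  and mul_scale_right [simp]: "mul x (sc a y) = sc a (mul x y)"
  and scale_one [simp]: "sc 1 x = x"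
  using scalable_monoid unfolding scalable_monoid_def by metis+

lemma sim_scale_scale: "sm_sim sc (sc a u) (sc b u)"
proof -
  have "sc 0 (sc a u) = sc 0 (sc b u)" by simp
  then show ?thesis unfolding sm_sim_def by blast
qed

lemma unit_for_scale_add_eq:
  assumes u: "unit_for sc C u" and u': "unit_for sc C u'"
    and "sc r u = sc r' u'" and "sc q u = sc q' u'"
  shows "sc (r + q) u = sc (r' + q') u'"
proof -
  obtain m where m: "u' = sc m u"
    using u u' unfolding unit_for_def by blast
  have inj: "l = l'" if "sc l u = sc l' u" for l l'
    using u that unfolding unit_for_def by blast
  have "r = r' * m" and "q = q' * m"
    using assms(3,4) by (simp_all add: m inj)
  then show ?thesis
    by (simp add: m distrib_right)
qed

lemma sm_add_eq:
  assumes u: "unit_for sc (orbitoid sc x) u" and x: "x = sc r u" and y: "y = sc q u"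
  shows "sm_add sc x y = sc (r + q) u"
  unfolding sm_add_def
proof (rule some_equality)
  show "\<exists>u' r' q'. unit_for sc (orbitoid sc x) u' \<and> x = sc r' u' \<and> y = sc q' u' \<and>
          sc (r + q) u = sc (r' + q') u'"
    using assms by blast
next
  fix s
  assume "\<exists>u' r' q'. unit_for sc (orbitoid sc x) u' \<and> x = sc r' u' \<and> y = sc q' u' \<and>
            s = sc (r' + q') u'"
  then obtain u' r' q' where u': "unit_for sc (orbitoid sc x) u'"
      and "x = sc r' u'" "y = sc q' u'" and s: "s = sc (r' + q') u'"
    by blast
  then have "sc r u = sc r' u'" "sc q u = sc q' u'"
    using x y by simp_all
  then show "s = sc (r + q) u"
    using unit_for_scale_add_eq[OF u u'] s by simp
qed

end

locale scalable_dense_units = scalable +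
  fixes U :: "'x set"
  assumes units: "u \<in> U \<Longrightarrow> unit_elem sc u"
    and dense: "dense sc U"
begin

lemma orbitoid_scale_unit:
  assumes u: "u \<in> U"
  shows "orbitoid sc (sc r u) = range (\<lambda>l. sc l u)"
proof
  show "orbitoid sc (sc r u) \<subseteq> range (\<lambda>l. sc l u)"
  proof
    fix y
    assume "y \<in> orbitoid sc (sc r u)"
    then obtain a b where ab: "sc (a * r) u = sc b y"
      unfolding orbitoid_def sm_sim_def by auto
    obtain v where v: "v \<in> U" "sm_sim sc v y"
      using dense unfolding dense_def by blast
    then obtain m where m: "y = sc m v"
      using unit_elem_orbitoid_scale[OF units] unfolding orbitoid_def by blast
    have "sc (a * r) u = sc (b * m) v"
      using ab m by simp
    then have "sm_sim sc u v"
      unfolding sm_sim_def by blast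
    then obtain n where "v = sc n u"
      using unit_elem_orbitoid_scale[OF units[OF u]] unfolding orbitoid_def by blast
    then have "y = sc (m * n) u"
      using m by simp
    then show "y \<in> range (\<lambda>l. sc l u)"
      by blast
  qed
  show "range (\<lambda>l. sc l u) \<subseteq> orbitoid sc (sc r u)"
    by (auto simp: orbitoid_def sim_scale_scale)
qed

lemma unit_for_orbitoid_scale:
  assumes "u \<in> U"
  shows "unit_for sc (orbitoid sc (sc r u)) u"
proof -
  have "u = sc 1 u" by simp
  then show ?thesis
    unfolding unit_for_def orbitoid_scale_unit[OF assms]
    using unit_elem_scale_inj[OF units[OF assms]] by blast
qed

lemma sm_add_scale_unit:
  assumes "u \<in> U"
  shows "sm_add sc (sc r u) (sc q u) = sc (r + q) u"
  using sm_add_eq[OF unit_for_orbitoid_scale[OF assms] refl refl] .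

lemma orbitoid_eq_multiples_of_unit:
  assumes "A \<in> orbitoids sc"
  obtains u where "u \<in> U" and "A = range (\<lambda>l. sc l u)"
proof -
  obtain w where w: "A = orbitoid sc w"
    using assms unfolding orbitoids_def by blast
  obtain u where u: "u \<in> U" "sm_sim sc u w"
    using dense unfolding dense_def by blast
  then obtain l where "w = sc l u"
    using unit_elem_orbitoid_scale[OF units] unfolding orbitoid_def by blast
  then have "A = range (\<lambda>l. sc l u)"
    using w orbitoid_scale_unit[OF u(1)] by simp
  with u(1) show ?thesis
    by (rule that)
qed

end

theorem proposition2p39:
  fixes mul :: "'x \<Rightarrow> 'x \<Rightarrow> 'x" and e :: 'x and sc :: "'r::ring_1 \<Rightarrow> 'x \<Rightarrow> 'x"
    and U :: "'x set"
  assumes "scalable_monoid mul e sc"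
    and "\<forall>u\<in>U. unit_elem sc u"
    and "dense sc U"
    and "closed_set mul U"
  shows "\<forall>A\<in>orbitoids sc. \<forall>B\<in>orbitoids sc. \<forall>x\<in>A. \<forall>y\<in>A. \<forall>z\<in>B.
           mul (sm_add sc x y) z = sm_add sc (mul x z) (mul y z) \<and>
           mul z (sm_add sc x y) = sm_add sc (mul z x) (mul z y)"
proof (intro ballI)
  interpret scalable_dense_units mul e sc U
    using assms(1-3) by unfold_locales blast+
  fix A B x y z
  assume A: "A \<in> orbitoids sc" and B: "B \<in> orbitoids sc" and "x \<in> A" "y \<in> A" "z \<in> B"
  obtain u where u: "u \<in> U" "A = range (\<lambda>l. sc l u)"
    using A by (rule orbitoid_eq_multiples_of_unit)
  obtain v where v: "v \<in> U" "B = range (\<lambda>l. sc l v)"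
    using B by (rule orbitoid_eq_multiples_of_unit)
  obtain r q k where x: "x = sc r u" and y: "y = sc q u" and z: "z = sc k v"
    using \<open>x \<in> A\<close> \<open>y \<in> A\<close> \<open>z \<in> B\<close> u(2) v(2) by blast
  have "mul u v \<in> U" "mul v u \<in> U"
    using u(1) v(1) assms(4) unfolding closed_set_def by blast+
  with u(1) show "mul (sm_add sc x y) z = sm_add sc (mul x z) (mul y z) \<and>
             mul z (sm_add sc x y) = sm_add sc (mul z x) (mul z y)"
    by (simp add: x y z sm_add_scale_unit distrib_left distrib_right)
qed

end
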